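(* For all integers $n,m$ with $1\le m\le n$, there exist a circuit $\mathcal{C}\subset\mathbb{Z}^n$ with $m(\mathcal{C})=m$ and a generic real polynomial system supported on $\mathcal{C}$ having exactly $m+1$ positive solutions.
   Context: A circuit is a set $\mathcal{C}\subset\mathbb{Z}^n$ of $n+2$ points whose affine span is $\mathbb{R}^n$; it contains a unique minimal affinely dependent subset, and $m(\mathcal{C})$ denotes the dimension of the affine span of that subset. A real polynomial system supported on $\mathcal{C}$ is a system of $n$ Laurent polynomial equations $F_1=\dots=F_n=0$ in $x=(x_1,\dots,x_n)$ with real coefficients, where each $F_j$ has support $\mathcal{C}$ (the set of exponent vectors of its monomials with nonzero coefficient). Such a system is generic if its number of solutions in $(\mathbb{C}^* )^n$ equals the normalized volume $v(\mathcal{C})$ of the convex hull of $\mathcal{C}$ (normalized so that $[0,1]^n$ has volume $n!$). Positive solutions are solutions in $(\mathbb{R}_{>0})^n$. *)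

theory Defs
  imports "HOL-Analysis.Analysis"
begin

definition real_pt :: "int ^ 'n \<Rightarrow> real ^ 'n" where
  "real_pt a = (\<chi> i. real_of_int (a $ i))"

definition is_circuit :: "(int ^ 'n::finite) set \<Rightarrow> bool" where
  "is_circuit C \<longleftrightarrow> finite C \<and> card C = CARD('n) + 2 \<and>
     affine hull (real_pt ` C) = UNIV"

definition circuit_core :: "(int ^ 'n::finite) set \<Rightarrow> (real ^ 'n) set" where
  "circuit_core C = (THE D. D \<subseteq> real_pt ` C \<and> affine_dependent D \<and>
      (\<forall>E. E \<subset> D \<longrightarrow> \<not> affine_dependent E))"

definition circuit_m :: "(int ^ 'n::finite) set \<Rightarrow> int" where
  "circuit_m C = aff_dim (circuit_core C)"

definition normalized_volume :: "(int ^ 'n::finite) set \<Rightarrow> real" where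
  "normalized_volume C = fact CARD('n) * measure lebesgue (convex hull (real_pt ` C))"

definition laurent_eval :: "(int ^ 'n::finite \<Rightarrow> real) \<Rightarrow> 'a::{real_field} ^ 'n \<Rightarrow> 'a" where
  "laurent_eval c x = (\<Sum>a\<in>{a. c a \<noteq> 0}. of_real (c a) * (\<Prod>i\<in>UNIV. (x $ i) powi (a $ i)))"

definition supported_on :: "('n::finite \<Rightarrow> int ^ 'n \<Rightarrow> real) \<Rightarrow> (int ^ 'n) set \<Rightarrow> bool" where
  "supported_on F C \<longleftrightarrow> (\<forall>j. {a. F j a \<noteq> 0} = C)"

definition torus_solutions :: "('n::finite \<Rightarrow> int ^ 'n \<Rightarrow> real) \<Rightarrow> (complex ^ 'n) set" where
  "torus_solutions F = {x. (\<forall>i. x $ i \<noteq> 0) \<and> (\<forall>j. laurent_eval (F j) x = 0)}"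

definition positive_solutions :: "('n::finite \<Rightarrow> int ^ 'n \<Rightarrow> real) \<Rightarrow> (real ^ 'n) set" where
  "positive_solutions F = {x. (\<forall>i. x $ i > 0) \<and> (\<forall>j. laurent_eval (F j) x = 0)}"

definition generic_system :: "('n::finite \<Rightarrow> int ^ 'n \<Rightarrow> real) \<Rightarrow> (int ^ 'n) set \<Rightarrow> bool" where
  "generic_system F C \<longleftrightarrow> finite (torus_solutions F) \<and>
     real (card (torus_solutions F)) = normalized_volume C"

end

(*
  The circuit is C = {0, e_1, ..., e_n, P} with P = 2 e_1 - 2 e_2 + 2 e_3 - ... (m nonzero entries).
  Its affine dependence involves exactly 0, P, e_1, ..., e_m, so m(C) = m, and triangulating
  conv C along the dependence shows that its normalized volume is half the sum of the absolute
  values of the coefficients, i.e. m + 1.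

  The system x_i = a_i + b_i x^P (made to have support C in every equation by adding the sum of
  all equations) is parametrized by y = x^P, which turns it into the univariate equation
  y = prod_{k<m} l_k(y)^(2 (-1)^k), i.e. into a polynomial equation of degree m + 1.  With
  l_k(y) = s_k (M^(2(k+1)) + y) for a large M, a tropical estimate shows that this polynomial
  changes sign between consecutive points M^0, M^2, ..., M^(2(m+1)).  So it has m + 1 positive
  roots, and these are all of its complex roots: the system has exactly m + 1 = vol(C) solutions
  in the torus, all of them positive.
*)
theory Submission
  imports Defs "HOL-Computational_Algebra.Polynomial"
begin

section \<open>Volumes of simplices\<close>

text \<open>The library's measure_linear_image requires a well-ordered index type.  For an arbitrary
  finite index type we only need stretches (measure_stretch) and shears, and the latter are reduced
  to measure_shear_interval.\<close>

lemma sum_scaleR_axis: "(\<Sum>i\<in>UNIV. c i *\<^sub>R axis i (1::real)) = (\<chi> i. c i)"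
  by (simp add: vec_eq_iff sum_component axis_def if_distrib[of "\<lambda>x. _ * x"] cong: if_cong)

lemma measure_shear_cbox:
  fixes a b :: "real^'n"
  assumes "m \<noteq> n"
  shows "measure lebesgue ((\<lambda>x. \<chi> i. if i = m then x$m + x$n else x$i) ` cbox a b)
           = measure lebesgue (cbox a b)"
proof (cases "cbox a b = {}")
  case False
  let ?f = "\<lambda>x::real^'n. \<chi> i. if i = m then x$m + x$n else x$i"
  \<comment> \<open>measure_shear_interval needs 0 \<le> a$n, so translate the box first.\<close>
  define v :: "real^'n" where "v = (\<chi> i. if i = n then - a$n else 0)"
  have f_add: "?f (v + x) = ?f v + ?f x" for x
    by (simp add: vec_eq_iff)
  have "?f ` cbox (v + a) (v + b) = (+) (?f v) ` ?f ` cbox a b"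
    by (simp only: cbox_translation image_image f_add)
  then have "measure lebesgue (?f ` cbox a b) = measure lebesgue (?f ` cbox (v + a) (v + b))"
    by (simp add: measure_translation)
  also have "\<dots> = measure lebesgue (cbox (v + a) (v + b))"
    using assms False by (intro measure_shear_interval) (auto simp: v_def cbox_translation)
  also have "\<dots> = measure lebesgue (cbox a b)"
    by (simp only: cbox_translation measure_translation)
  finally show ?thesis .
qed simp

lemma measure_shear:
  fixes S :: "(real^'n) set"
  assumes "m \<noteq> n" "S \<in> lmeasurable"
  shows "(\<lambda>x. \<chi> i. if i = m then x$m + x$n else x$i) ` S \<in> lmeasurable \<and>
         measure lebesgue ((\<lambda>x. \<chi> i. if i = m then x$m + x$n else x$i) ` S) = measure lebesgue S"
proof -
  have "linear (\<lambda>x::real^'n. \<chi> i. if i = m then x$m + x$n else x$i)"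
    by (rule linearI) (auto simp: vec_eq_iff algebra_simps)
  then show ?thesis
    using measure_linear_sufficient[OF _ assms(2), of _ 1] measure_shear_cbox[OF assms(1)] by auto
qed

lemma measure_shear_scaled:
  fixes S :: "(real^'n) set"
  assumes "m \<noteq> n" "S \<in> lmeasurable"
  shows "(\<lambda>x. x + (t * x$n) *\<^sub>R axis m 1) ` S \<in> lmeasurable \<and>
         measure lebesgue ((\<lambda>x. x + (t * x$n) *\<^sub>R axis m 1) ` S) = measure lebesgue S"
proof (cases "t = 0")
  case False
  define c where "c k = (if k = n then t else 1)" for k
  let ?stretch = "\<lambda>c x::real^'n. \<chi> k. c k * x$k"
  let ?shear = "\<lambda>x::real^'n. \<chi> i. if i = m then x$m + x$n else x$i"
  \<comment> \<open>Conjugate the unit shear by the stretch of coordinate n by the factor t.\<close>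
  have "(\<lambda>x. x + (t * x$n) *\<^sub>R axis m 1) = ?stretch (inverse \<circ> c) \<circ> ?shear \<circ> ?stretch c"
    using assms(1) False by (intro ext) (auto simp: c_def vec_eq_iff axis_def)
  then have eq: "(\<lambda>x. x + (t * x$n) *\<^sub>R axis m 1) ` S = ?stretch (inverse \<circ> c) ` ?shear ` ?stretch c ` S"
    by (simp only: image_comp o_assoc)
  have prod_c: "prod c UNIV = t"
    by (simp add: c_def prod.If_cases)
  have cS: "?stretch c ` S \<in> lmeasurable"
    using assms(2) by (rule measurable_stretch)
  note shear = measure_shear[OF assms(1) cS]
  have scS: "?shear ` ?stretch c ` S \<in> lmeasurable"
    using shear by blast
  have "prod (inverse \<circ> c) UNIV = inverse t"
    using prod_c by (simp only: prod_inversef)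
  then show ?thesis
    unfolding eq using False measurable_stretch[OF scS] measure_stretch[OF scS]
      shear measure_stretch[OF assms(2)] prod_c
    by (simp add: abs_inverse)
qed (simp add: assms(2))

lemma measure_shear_vector:
  fixes S :: "(real^'n) set"
  assumes "v$n = 0" "S \<in> lmeasurable"
  shows "(\<lambda>x. x + x$n *\<^sub>R v) ` S \<in> lmeasurable \<and>
         measure lebesgue ((\<lambda>x. x + x$n *\<^sub>R v) ` S) = measure lebesgue S"
proof -
  have shear_sum: "(\<lambda>x. x + x$n *\<^sub>R (\<Sum>i\<in>F. t i *\<^sub>R axis i 1)) ` S \<in> lmeasurable \<and>
        measure lebesgue ((\<lambda>x. x + x$n *\<^sub>R (\<Sum>i\<in>F. t i *\<^sub>R axis i 1)) ` S) = measure lebesgue S"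
    if "finite F" "n \<notin> F" for F t
    using that
  proof (induction F rule: finite_induct)
    case (insert i F)
    have F_n: "(\<Sum>j\<in>F. t j *\<^sub>R axis j (1::real)) $ n = 0"
      using insert.prems by (auto simp: sum_component axis_def intro!: sum.neutral)
    let ?g = "\<lambda>x. x + x$n *\<^sub>R (\<Sum>i\<in>F. t i *\<^sub>R axis i 1)"
    have eq: "(\<lambda>x. x + x$n *\<^sub>R (\<Sum>i\<in>insert i F. t i *\<^sub>R axis i 1))
          = (\<lambda>y. y + (t i * y$n) *\<^sub>R axis i 1) \<circ> ?g"
      using insert.hyps insert.prems F_n by (intro ext) (auto simp: vec_eq_iff axis_def algebra_simps)
    have IH: "?g ` S \<in> lmeasurable \<and> measure lebesgue (?g ` S) = measure lebesgue S"
      using insert by simp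
    have "i \<noteq> n"
      using insert.prems by auto
    show ?case
      unfolding eq image_comp[symmetric]
      using measure_shear_scaled[OF \<open>i \<noteq> n\<close> IH[THEN conjunct1], of "t i"] IH by simp
  qed (simp add: assms(2))
  have "(\<Sum>i\<in>UNIV - {n}. v$i *\<^sub>R axis i 1) = (\<Sum>i\<in>UNIV. v$i *\<^sub>R axis i (1::real))"
    using assms(1) by (intro sum.mono_neutral_left) auto
  also have "\<dots> = v"
    by (simp only: sum_scaleR_axis vec_lambda_eta)
  finally have "(\<Sum>i\<in>UNIV - {n}. v$i *\<^sub>R axis i 1) = v" .
  with shear_sum[of "UNIV - {n}" "\<lambda>i. v$i"] show ?thesis
    by simp
qed

lemma measure_std_simplex_cart:
  "measure lebesgue (convex hull (insert 0 (range (\<lambda>i. axis i 1))) :: (real^'n) set)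
     = 1 / fact CARD('n)"
proof -
  have "range (\<lambda>i. axis i 1) = (Basis :: (real^'n) set)"
    by (auto simp: Basis_vec_def)
  moreover have "compact (convex hull (insert 0 (Basis :: (real^'n) set)))"
    by (intro finite_imp_compact_convex_hull) auto
  ultimately show ?thesis
    using content_std_simplex[where 'a="real^'n"]
    by (simp add: measure_completion compact_imp_closed)
qed

lemma measure_simplex_replace_axis:
  fixes p :: "real^'n"
  shows "measure lebesgue (convex hull (insert 0 (insert p ((\<lambda>i. axis i 1) ` (- {k})))))
           = \<bar>p$k\<bar> / fact CARD('n)"
proof -
  define c where "c i = (if i = k then p$k else 1)" for i
  define v where "v = p - p$k *\<^sub>R axis k 1"
  let ?shear = "\<lambda>x. x + x$k *\<^sub>R v" and ?stretch = "\<lambda>x. \<chi> i. c i * x$i"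
  let ?std = "convex hull (insert 0 (range (\<lambda>i. axis i 1))) :: (real^'n) set"
  have lin: "linear (?stretch \<circ> ?shear)"
    by (rule linearI) (auto simp: vec_eq_iff algebra_simps)
  have T_axis: "(?stretch \<circ> ?shear) (axis i 1) = (if i = k then p else axis i 1)" for i
    by (auto simp: c_def v_def vec_eq_iff axis_def)
  have T_0: "(?stretch \<circ> ?shear) 0 = 0"
    by (simp add: vec_eq_iff)
  have "(?stretch \<circ> ?shear) ` insert 0 (range (\<lambda>i. axis i 1))
          = insert 0 (range (\<lambda>i. if i = k then p else axis i 1))"
    by (simp only: image_insert image_image T_axis T_0)
  also have "\<dots> = insert 0 (insert p ((\<lambda>i. axis i 1) ` (- {k})))"
    by auto
  finally have hull: "convex hull (insert 0 (insert p ((\<lambda>i. axis i 1) ` (- {k})))) = ?stretch ` ?shear ` ?std"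
    using convex_hull_linear_image[OF lin] by (simp add: image_comp)
  have std: "?std \<in> lmeasurable"
    by (intro lmeasurable_compact finite_imp_compact_convex_hull) auto
  have "v$k = 0"
    by (simp add: v_def)
  note shear = measure_shear_vector[OF this std]
  have "prod c UNIV = p$k"
    by (simp add: c_def prod.If_cases)
  then show ?thesis
    unfolding hull measure_stretch[OF shear[THEN conjunct1]] shear[THEN conjunct2] measure_std_simplex_cart
    by simp
qed

section \<open>Circuits in a real vector space\<close>

lemma negligible_convex_hull_card_le:
  fixes T :: "'a::euclidean_space set"
  assumes "finite T" "card T \<le> DIM('a)"
  shows "negligible (convex hull T)"
proof -
  have "aff_dim (convex hull T) \<noteq> DIM('a)"
    using aff_dim_le_card[OF assms(1)] assms(2) by (simp add: aff_dim_convex_hull)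
  then show ?thesis
    by (simp add: negligible_convex_interior low_dim_interior)
qed

lemma sum_pos_eq_half_sum_abs:
  fixes f :: "'a \<Rightarrow> real"
  assumes "finite A" "sum f A = 0"
  shows "(\<Sum>x\<in>{x\<in>A. f x > 0}. f x) = (\<Sum>x\<in>A. \<bar>f x\<bar>) / 2"
proof -
  have split: "sum g A = sum g {x\<in>A. f x > 0} + sum g {x\<in>A. \<not> f x > 0}" for g :: "'a \<Rightarrow> real"
  proof -
    have "A = {x\<in>A. f x > 0} \<union> {x\<in>A. \<not> f x > 0}"
      by blast
    then show ?thesis
      using assms(1) by (metis (no_types, lifting) sum.union_disjoint finite_Un disjoint_iff mem_Collect_eq)
  qed
  have "(\<Sum>x\<in>{x\<in>A. f x > 0}. \<bar>f x\<bar>) = (\<Sum>x\<in>{x\<in>A. f x > 0}. f x)"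
    by (rule sum.cong) auto
  moreover have "(\<Sum>x\<in>{x\<in>A. \<not> f x > 0}. \<bar>f x\<bar>) = - (\<Sum>x\<in>{x\<in>A. \<not> f x > 0}. f x)"
    by (subst sum_negf[symmetric], rule sum.cong) auto
  ultimately show ?thesis
    using split[of f] split[of "\<lambda>x. \<bar>f x\<bar>"] assms(2) by linarith
qed

lemma convex_hull_Diff_finite_iff:
  fixes X :: "'a::real_vector set"
  assumes "finite X"
  shows "y \<in> convex hull (X - P) \<longleftrightarrow>
           (\<exists>u. (\<forall>x\<in>X. 0 \<le> u x) \<and> (\<forall>x\<in>P. u x = 0) \<and> sum u X = 1 \<and> (\<Sum>x\<in>X. u x *\<^sub>R x) = y)"
    (is "_ \<longleftrightarrow> ?weights")
proof
  assume "y \<in> convex hull (X - P)"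
  then obtain u where u: "\<forall>x\<in>X - P. 0 \<le> u x" "sum u (X - P) = 1" "(\<Sum>x\<in>X - P. u x *\<^sub>R x) = y"
    using assms by (auto simp: convex_hull_finite)
  define u' where "u' x = (if x \<in> P then 0 else u x)" for x
  have "sum u' X = sum u (X - P)"
    using assms by (simp add: u'_def sum.If_cases Diff_eq)
  moreover have "(\<Sum>x\<in>X. u' x *\<^sub>R x) = (\<Sum>x\<in>X. if x \<in> P then 0 else u x *\<^sub>R x)"
    by (rule sum.cong) (auto simp: u'_def)
  then have "(\<Sum>x\<in>X. u' x *\<^sub>R x) = (\<Sum>x\<in>X - P. u x *\<^sub>R x)"
    using assms by (simp add: sum.If_cases Diff_eq)
  ultimately show ?weights
    using u by (intro exI[of _ u']) (auto simp: u'_def)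
next
  assume ?weights
  then obtain u where u: "\<forall>x\<in>X. 0 \<le> u x" "\<forall>x\<in>P. u x = 0" "sum u X = 1" "(\<Sum>x\<in>X. u x *\<^sub>R x) = y"
    by blast
  have "sum u (X - P) = sum u X" "(\<Sum>x\<in>X - P. u x *\<^sub>R x) = (\<Sum>x\<in>X. u x *\<^sub>R x)"
    using assms u(2) by (auto intro: sum.mono_neutral_left)
  then show "y \<in> convex hull (X - P)"
    using assms u by (auto simp: convex_hull_finite intro!: exI[of _ u])
qed

locale affine_circuit =
  fixes X :: "'a::real_vector set" and lam :: "'a \<Rightarrow> real"
  assumes finite_X: "finite X"
    and sum_lam: "sum lam X = 0"
    and sum_lam_scaleR: "(\<Sum>x\<in>X. lam x *\<^sub>R x) = 0"
    and lam_nonzero: "\<exists>x\<in>X. lam x \<noteq> 0"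
    and dependence_unique:
      "\<And>u. sum u X = 0 \<Longrightarrow> (\<Sum>x\<in>X. u x *\<^sub>R x) = 0 \<Longrightarrow> \<exists>s. \<forall>x\<in>X. u x = s * lam x"
begin

lemma sum_mult_lam_scaleR: "(\<Sum>x\<in>X. (c * lam x) *\<^sub>R x) = 0"
proof -
  have "(\<Sum>x\<in>X. (c * lam x) *\<^sub>R x) = c *\<^sub>R (\<Sum>x\<in>X. lam x *\<^sub>R x)"
    by (simp add: scaleR_sum_right)
  then show ?thesis
    using sum_lam_scaleR by simp
qed

lemma affine_circuit_scale:
  assumes "c \<noteq> 0"
  shows "affine_circuit X (\<lambda>x. c * lam x)"
proof
  show "(\<Sum>x\<in>X. c * lam x) = 0"
    using sum_lam by (simp add: sum_distrib_left[symmetric])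
  show "(\<Sum>x\<in>X. (c * lam x) *\<^sub>R x) = 0"
    by (rule sum_mult_lam_scaleR)
  show "\<exists>x\<in>X. c * lam x \<noteq> 0"
    using lam_nonzero assms by simp
  fix u assume "sum u X = 0" "(\<Sum>x\<in>X. u x *\<^sub>R x) = 0"
  then obtain s where "\<forall>x\<in>X. u x = s * lam x"
    using dependence_unique by blast
  then show "\<exists>s. \<forall>x\<in>X. u x = s * (c * lam x)"
    using assms by (intro exI[of _ "s / c"]) simp
qed (fact finite_X)

lemma convex_hull_eq_Union_Diff:
  "convex hull X = (\<Union>p\<in>{x\<in>X. lam x > 0}. convex hull (X - {p}))"
proof
  show "(\<Union>p\<in>{x\<in>X. lam x > 0}. convex hull (X - {p})) \<subseteq> convex hull X"
    by (intro UN_least hull_mono) auto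
next
  let ?S = "{x\<in>X. lam x > 0}"
  have "?S \<noteq> {}"
  proof
    assume "?S = {}"
    then have "\<forall>x\<in>X. 0 \<le> - lam x"
      by force
    moreover have "sum (\<lambda>x. - lam x) X = 0"
      using sum_lam by (simp add: sum_negf)
    ultimately show False
      using sum_nonneg_eq_0_iff[OF finite_X, of "\<lambda>x. - lam x"] lam_nonzero by auto
  qed
  show "convex hull X \<subseteq> (\<Union>p\<in>?S. convex hull (X - {p}))"
  proof
    fix y assume "y \<in> convex hull X"
    then obtain u where u: "\<forall>x\<in>X. 0 \<le> u x" "sum u X = 1" "(\<Sum>x\<in>X. u x *\<^sub>R x) = y"
      using convex_hull_Diff_finite_iff[OF finite_X, of y "{}"] by auto
    \<comment> \<open>Move from u along the dependence until the first weight on the positive side vanishes.\<close>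
    define t where "t = Min ((\<lambda>x. u x / lam x) ` ?S)"
    have "t \<in> (\<lambda>x. u x / lam x) ` ?S"
      unfolding t_def using \<open>?S \<noteq> {}\<close> finite_X by (intro Min_in) auto
    then obtain p where p: "p \<in> ?S" "t = u p / lam p"
      by blast
    have t_le: "t \<le> u x / lam x" if "x \<in> ?S" for x
      unfolding t_def using that finite_X by (intro Min_le) auto
    define v where "v x = u x - t * lam x" for x
    have "0 \<le> v x" if "x \<in> X" for x
    proof (cases "lam x > 0")
      case True
      then show ?thesis
        using t_le[of x] that by (simp add: v_def pos_le_divide_eq)
    next
      case False
      moreover have "0 \<le> t"
        using p u(1) by auto
      ultimately have "t * lam x \<le> 0"
        by (simp add: mult_nonneg_nonpos)
      moreover have "0 \<le> u x"
        using u(1) that by blast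
      ultimately show ?thesis
        by (simp add: v_def)
    qed
    moreover have "v p = 0"
      using p by (simp add: v_def)
    moreover have "sum v X = 1"
      using u(2) sum_lam by (simp add: v_def sum_subtractf sum_distrib_left[symmetric])
    moreover have "(\<Sum>x\<in>X. v x *\<^sub>R x) = y"
      using u(3) sum_mult_lam_scaleR by (simp add: v_def scaleR_diff_left sum_subtractf)
    ultimately have "y \<in> convex hull (X - {p})"
      using convex_hull_Diff_finite_iff[OF finite_X] by blast
    then show "y \<in> (\<Union>p\<in>?S. convex hull (X - {p}))"
      using p by blast
  qed
qed

lemma convex_hull_Diff_Int_subset:
  assumes p: "p \<in> X" "lam p > 0" and q: "q \<in> X" "lam q > 0"
  shows "convex hull (X - {p}) \<inter> convex hull (X - {q}) \<subseteq> convex hull (X - {p, q})"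
proof
  fix y assume "y \<in> convex hull (X - {p}) \<inter> convex hull (X - {q})"
  then obtain u v where
      u: "\<forall>x\<in>X. 0 \<le> u x" "u p = 0" "sum u X = 1" "(\<Sum>x\<in>X. u x *\<^sub>R x) = y" and
      v: "\<forall>x\<in>X. 0 \<le> v x" "v q = 0" "sum v X = 1" "(\<Sum>x\<in>X. v x *\<^sub>R x) = y"
    unfolding Int_iff convex_hull_Diff_finite_iff[OF finite_X] by auto
  have "sum (\<lambda>x. u x - v x) X = 0" "(\<Sum>x\<in>X. (u x - v x) *\<^sub>R x) = 0"
    using u v by (simp_all add: sum_subtractf scaleR_diff_left)
  then obtain s where s: "\<forall>x\<in>X. u x - v x = s * lam x"
    using dependence_unique by blast
  have "s * lam p = - v p" "s * lam q = u q"
    using s p(1) q(1) u(2) v(2) by force+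
  then have "s * lam p \<le> 0" "s * lam q \<ge> 0"
    using u(1) v(1) p(1) q(1) by auto
  then have "s = 0"
    using p(2) q(2) by (simp add: mult_le_0_iff zero_le_mult_iff)
  then have "u q = 0"
    using s q v(2) by simp
  then show "y \<in> convex hull (X - {p, q})"
    using u unfolding convex_hull_Diff_finite_iff[OF finite_X] by auto
qed

lemma support_subset_affine_dependent:
  assumes "D \<subseteq> X" "affine_dependent D"
  shows "{x\<in>X. lam x \<noteq> 0} \<subseteq> D"
proof -
  have "finite D"
    using assms(1) finite_X by (rule finite_subset)
  then obtain U where U: "sum U D = 0" "\<exists>v\<in>D. U v \<noteq> 0" "(\<Sum>v\<in>D. U v *\<^sub>R v) = 0"
    using assms(2) by (auto simp: affine_dependent_explicit_finite)
  define U' where "U' x = (if x \<in> D then U x else 0)" for x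
  have "X \<inter> D = D"
    using assms(1) by blast
  then have "sum U' X = 0" "(\<Sum>x\<in>X. U' x *\<^sub>R x) = 0"
    using U finite_X
    by (simp_all add: U'_def sum.inter_restrict[symmetric] if_distrib[of "\<lambda>c. c *\<^sub>R _"] cong: if_cong)
  then obtain s where s: "\<forall>x\<in>X. U' x = s * lam x"
    using dependence_unique by blast
  then have "s \<noteq> 0"
    using U(2) assms(1) by (force simp: U'_def)
  with s show ?thesis
    by (auto simp: U'_def split: if_splits)
qed

lemma affine_dependent_support: "affine_dependent {x\<in>X. lam x \<noteq> 0}"
proof -
  let ?K = "{x\<in>X. lam x \<noteq> 0}"
  have "sum lam ?K = sum lam X" "(\<Sum>x\<in>?K. lam x *\<^sub>R x) = (\<Sum>x\<in>X. lam x *\<^sub>R x)"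
    using finite_X by (auto intro: sum.mono_neutral_left)
  then show ?thesis
    using finite_X sum_lam sum_lam_scaleR lam_nonzero
    by (subst affine_dependent_explicit_finite) (auto intro!: exI[of _ lam])
qed

lemma minimal_affine_dependent_subset_eq:
  "(THE D. D \<subseteq> X \<and> affine_dependent D \<and> (\<forall>E. E \<subset> D \<longrightarrow> \<not> affine_dependent E))
     = {x\<in>X. lam x \<noteq> 0}"
proof (rule the_equality)
  show "{x\<in>X. lam x \<noteq> 0} \<subseteq> X \<and> affine_dependent {x\<in>X. lam x \<noteq> 0} \<and>
        (\<forall>E. E \<subset> {x\<in>X. lam x \<noteq> 0} \<longrightarrow> \<not> affine_dependent E)"
    using affine_dependent_support support_subset_affine_dependent by blast
next
  fix D assume "D \<subseteq> X \<and> affine_dependent D \<and> (\<forall>E. E \<subset> D \<longrightarrow> \<not> affine_dependent E)"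
  then show "D = {x\<in>X. lam x \<noteq> 0}"
    using affine_dependent_support support_subset_affine_dependent by blast
qed

end

lemma measure_convex_hull_affine_circuit:
  fixes X :: "'a::euclidean_space set"
  assumes "affine_circuit X lam" "card X = DIM('a) + 2"
  shows "measure lebesgue (convex hull X)
           = (\<Sum>p\<in>{x\<in>X. lam x > 0}. measure lebesgue (convex hull (X - {p})))"
proof -
  interpret affine_circuit X lam
    by (fact assms(1))
  have "negligible (convex hull (X - {p}) \<inter> convex hull (X - {q}))"
    if "p \<in> X" "lam p > 0" "q \<in> X" "lam q > 0" "p \<noteq> q" for p q
  proof -
    have "card (X - {p, q}) = DIM('a)"
      using that assms(2) finite_X by (simp add: card_Diff_subset)
    then have "negligible (convex hull (X - {p, q}))"
      using finite_X by (intro negligible_convex_hull_card_le) auto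
    then show ?thesis
      using convex_hull_Diff_Int_subset[OF that(1-4)] by (rule negligible_subset)
  qed
  then have "pairwise (\<lambda>p q. negligible (convex hull (X - {p}) \<inter> convex hull (X - {q}))) {x\<in>X. lam x > 0}"
    by (auto intro: pairwiseI)
  moreover have "convex hull (X - {p}) \<in> lmeasurable" for p
    using finite_X by (intro lmeasurable_compact finite_imp_compact_convex_hull) auto
  ultimately show ?thesis
    unfolding convex_hull_eq_Union_Diff using finite_X
    by (intro measure_negligible_finite_Union_image) auto
qed

section \<open>A univariate polynomial with many positive roots\<close>

lemma sum_neg_one_power: "(\<Sum>k<n. (-1::'a::ring_1) ^ k) = (if even n then 0 else 1)"
  by (induction n) auto

lemma card_odd_below: "card {k. k < n \<and> odd k} = n div 2"
proof (induction n)
  case (Suc n)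
  have "{k. k < Suc n \<and> odd k} = (if odd n then insert n {k. k < n \<and> odd k} else {k. k < n \<and> odd k})"
    by (auto simp: less_Suc_eq)
  then show ?case
    using Suc by (auto simp: odd_pos)
qed simp

lemma card_even_below: "card {k. k < n \<and> even k} = (n + 1) div 2"
proof (induction n)
  case (Suc n)
  have "{k. k < Suc n \<and> even k} = (if even n then insert n {k. k < n \<and> even k} else {k. k < n \<and> even k})"
    by (auto simp: less_Suc_eq)
  then show ?case
    using Suc by auto
qed simp

lemma degree_prod_power2_le:
  assumes "\<And>k. k \<in> A \<Longrightarrow> degree (p k) \<le> 1"
  shows "degree (\<Prod>k\<in>A. p k ^ 2) \<le> 2 * card A"
proof (cases "finite A")
  case True
  have "degree (\<Prod>k\<in>A. p k ^ 2) \<le> (\<Sum>k\<in>A. degree (p k ^ 2))"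
    using degree_prod_sum_le[OF True, of "\<lambda>k. p k ^ 2"] by (simp add: o_def)
  also have "\<dots> \<le> (\<Sum>k\<in>A. 2)"
    using assms by (intro sum_mono order.trans[OF degree_power_le]) auto
  finally show ?thesis
    by simp
qed simp

lemma sum_alternating_max:
  assumes "j \<le> m + 1"
  shows "2 * int j + (-1)^(m+1) * (2 * int m + 1) - 4 * (\<Sum>k<m. (-1)^k * int (max (k+1) j))
           = (-1)^(j+1)"
  using assms
proof (induction m)
  case 0
  then have "j = 0 \<or> j = 1"
    by auto
  then show ?case
    by auto
next
  case (Suc m)
  show ?case
  proof (cases "j \<le> m + 1")
    case True
    then show ?thesis
      using Suc.IH by (simp add: algebra_simps)
  next
    case False
    then have "j = m + 2"
      using Suc.prems by simp
    moreover have "(\<Sum>k<Suc m. (-1)^k * int (max (k+1) j)) = (\<Sum>k<Suc m. (-1)^k) * int j"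
      unfolding sum_distrib_right using False by (intro sum.cong) auto
    ultimately show ?thesis
      by (auto simp: sum_neg_one_power)
  qed
qed

lemma ln_power_add_power_bounds:
  fixes M :: real
  assumes "1 \<le> M"
  shows "real (max a b) * ln M \<le> ln (M ^ a + M ^ b)"
    and "ln (M ^ a + M ^ b) \<le> real (max a b) * ln M + ln 2"
proof -
  have pos: "0 < M ^ max a b"
    using assms by simp
  have "M ^ a \<le> M ^ max a b" "M ^ b \<le> M ^ max a b"
    using assms by (auto intro: power_increasing)
  moreover have "M ^ max a b \<le> M ^ a + M ^ b"
    using assms by (simp add: max_def add_increasing add_increasing2)
  ultimately have "ln (M ^ max a b) \<le> ln (M ^ a + M ^ b)" "ln (M ^ a + M ^ b) \<le> ln (2 * M ^ max a b)"
    using pos by (subst ln_le_cancel_iff; simp add: add_pos_pos)+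
  moreover have "ln (M ^ max a b) = real (max a b) * ln M"
    using assms by (simp add: ln_realpow)
  ultimately show "real (max a b) * ln M \<le> ln (M ^ a + M ^ b)"
    and "ln (M ^ a + M ^ b) \<le> real (max a b) * ln M + ln 2"
    using pos assms by (simp_all add: ln_mult)
qed

locale gale_construction =
  fixes m :: nat
  assumes m_pos: "0 < m"
begin

text \<open>ln base = 2 (m + 1) ln 2 beats the accumulated error 2 m ln 2 of the tropical estimate
  below, and shift (through scale 0) makes the tropical value of ln y - ln (gale_monomial y) at
  y = base^(2j) equal to (-1)^(j+1) ln base, by sum_alternating_max.\<close>

definition base :: real where
  "base = 4 ^ (m + 1)"

definition shift :: int where
  "shift = (-1) ^ (m + 1) * (2 * int m + 1)"

definition offset :: "nat \<Rightarrow> real" where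
  "offset k = base ^ (2 * (k + 1))"

definition scale :: "nat \<Rightarrow> real" where
  "scale k = (if k = 0 then base powr (- shift / 2) else 1)"

definition factor :: "nat \<Rightarrow> 'a::real_field \<Rightarrow> 'a" where
  "factor k y = of_real (scale k) * (of_real (offset k) + y)"

definition gale_monomial :: "'a::real_field \<Rightarrow> 'a" where
  "gale_monomial y = (\<Prod>k<m. factor k y powi (2 * (-1) ^ k))"

text \<open>Clearing denominators in gale_monomial y = y.\<close>
definition gale_poly :: "'a::real_field poly" where
  "gale_poly = [:0, 1:] * (\<Prod>k | k < m \<and> odd k. [:of_real (scale k * offset k), of_real (scale k):] ^ 2)
                 - (\<Prod>k | k < m \<and> even k. [:of_real (scale k * offset k), of_real (scale k):] ^ 2)"

lemma poly_gale_poly: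
  "poly gale_poly y = y * (\<Prod>k | k < m \<and> odd k. factor k y ^ 2) - (\<Prod>k | k < m \<and> even k. factor k y ^ 2)"
  by (simp add: gale_poly_def factor_def poly_prod algebra_simps)

lemma poly_gale_poly_of_real: "poly gale_poly (of_real y :: 'a::real_field) = of_real (poly gale_poly y)"
  by (simp add: poly_gale_poly factor_def)

lemma factor_of_real: "factor k (of_real y :: 'a::real_field) = of_real (factor k y)"
  by (simp add: factor_def)

lemma base_gt_1: "1 < base"
  unfolding base_def by (rule one_less_power) auto

lemma ln_base: "ln base = 2 * (real m + 1) * ln 2"
proof -
  have "base = 2 ^ (2 * (m + 1))"
    by (simp add: base_def power_mult)
  then show ?thesis
    by (simp only: ln_realpow) simp
qed

lemma offset_pos: "0 < offset k"
  using base_gt_1 by (simp add: offset_def)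

lemma scale_pos: "0 < scale k"
  using base_gt_1 by (simp add: scale_def)

lemma factor_pos: "0 < y \<Longrightarrow> 0 < factor k (y::real)"
  using offset_pos[of k] scale_pos[of k] by (simp add: factor_def)

lemma gale_monomial_eq:
  "gale_monomial y = (\<Prod>k | k < m \<and> even k. factor k y ^ 2) / (\<Prod>k | k < m \<and> odd k. factor k y ^ 2)"
proof -
  have "gale_monomial y = (\<Prod>k<m. if odd k then inverse (factor k y ^ 2) else factor k y ^ 2)"
    unfolding gale_monomial_def by (rule prod.cong) (auto simp: power_int_minus)
  also have "\<dots> = (\<Prod>k | k < m \<and> odd k. inverse (factor k y ^ 2)) * (\<Prod>k | k < m \<and> even k. factor k y ^ 2)"
    by (simp add: prod.If_cases Int_def)
  also have "(\<Prod>k | k < m \<and> odd k. inverse (factor k y ^ 2)) = inverse (\<Prod>k | k < m \<and> odd k. factor k y ^ 2)"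
    using prod_inversef[of "\<lambda>k. factor k y ^ 2"] by (simp add: o_def)
  finally show ?thesis
    by (simp add: divide_inverse mult.commute)
qed

lemma poly_gale_poly_eq:
  assumes "\<forall>k<m. factor k y \<noteq> 0"
  shows "poly gale_poly y = (\<Prod>k | k < m \<and> odd k. factor k y ^ 2) * (y - gale_monomial y)"
proof -
  have "(\<Prod>k | k < m \<and> odd k. factor k y ^ 2) \<noteq> 0"
    using assms by simp
  then show ?thesis
    by (simp add: poly_gale_poly gale_monomial_eq field_simps)
qed

lemma poly_gale_poly_eq_0_iff:
  "\<forall>k<m. factor k y \<noteq> 0 \<Longrightarrow> poly gale_poly y = 0 \<longleftrightarrow> gale_monomial y = y"
  by (auto simp: poly_gale_poly_eq)

lemma ln_gale_monomial:
  fixes y :: real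
  assumes "0 < y"
  shows "ln (gale_monomial y) = (\<Sum>k<m. 2 * (-1) ^ k * ln (factor k y))"
proof -
  have "ln (factor k y powi (2 * (-1) ^ k)) = 2 * (-1) ^ k * ln (factor k y)" for k
    using powr_real_of_int'[of "factor k y" "2 * (-1) ^ k"] factor_pos[OF assms, of k]
    by (metis less_le ln_powr of_int_mult of_int_numeral of_int_power of_int_minus of_int_1)
  moreover have "ln (gale_monomial y) = (\<Sum>k<m. ln (factor k y powi (2 * (-1) ^ k)))"
    unfolding gale_monomial_def
    using factor_pos[OF assms] by (intro ln_prod) (simp_all add: less_imp_neq[symmetric])
  ultimately show ?thesis
    by simp
qed

lemma ln_gale_monomial_at_base_power:
  assumes "j \<le> m + 1"
  shows "\<bar>ln (base ^ (2 * j)) - ln (gale_monomial (base ^ (2 * j))) - (-1) ^ (j + 1) * ln base\<bar>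
           \<le> 2 * real m * ln 2"
proof -
  define y where "y = base ^ (2 * j)"
  define L where "L = ln base"
  have "0 < y"
    using base_gt_1 by (simp add: y_def)
  \<comment> \<open>Tropically, ln (offset k + y) is 2 max(k + 1, j) L.\<close>
  define e where "e k = ln (offset k + y) - 2 * real (max (k + 1) j) * L" for k
  have e: "0 \<le> e k" "e k \<le> ln 2" for k
  proof -
    have "offset k + y = base ^ (2 * (k + 1)) + base ^ (2 * j)"
      by (simp add: offset_def y_def)
    moreover have "real (max (2 * (k + 1)) (2 * j)) = 2 * real (max (k + 1) j)"
      by (simp add: max_def)
    ultimately show "0 \<le> e k" "e k \<le> ln 2"
      using ln_power_add_power_bounds[of base "2 * (k + 1)" "2 * j"] base_gt_1
      by (simp_all add: e_def L_def)
  qed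
  have ln_factor: "ln (factor k y) = ln (scale k) + 2 * real (max (k + 1) j) * L + e k" for k
    using scale_pos[of k] offset_pos[of k] \<open>0 < y\<close> by (simp add: factor_def e_def ln_mult)
  have "(\<Sum>k<m. (-1) ^ k * ln (scale k)) = (\<Sum>k<m. if k = 0 then ln (scale 0) else 0)"
    by (rule sum.cong) (auto simp: scale_def)
  also have "\<dots> = - real_of_int shift * L / 2"
    using m_pos by (simp add: scale_def L_def)
  finally have scale_sum: "(\<Sum>k<m. (-1) ^ k * ln (scale k)) = - real_of_int shift * L / 2" .
  have "ln (gale_monomial y) = 2 * (\<Sum>k<m. (-1) ^ k * ln (scale k))
      + 4 * L * (\<Sum>k<m. (-1) ^ k * real (max (k + 1) j)) + 2 * (\<Sum>k<m. (-1) ^ k * e k)"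
    unfolding ln_gale_monomial[OF \<open>0 < y\<close>] ln_factor
    by (simp add: sum.distrib sum_distrib_left algebra_simps)
  then have "ln (gale_monomial y) = 4 * (\<Sum>k<m. (-1) ^ k * real (max (k + 1) j)) * L
      + 2 * (\<Sum>k<m. (-1) ^ k * e k) - real_of_int shift * L"
    unfolding scale_sum by simp
  moreover have "ln y = 2 * real j * L"
    using base_gt_1 by (simp add: y_def L_def ln_realpow)
  moreover have "(2 * real j + real_of_int shift - 4 * (\<Sum>k<m. (-1) ^ k * real (max (k + 1) j))) * L
                   = (-1) ^ (j + 1) * L"
    using arg_cong[OF sum_alternating_max[OF assms], of real_of_int] by (simp add: shift_def)
  ultimately have "ln y - ln (gale_monomial y) - (-1) ^ (j + 1) * L = - 2 * (\<Sum>k<m. (-1) ^ k * e k)"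
    by (simp only: left_diff_distrib distrib_right)
  moreover have "\<bar>\<Sum>k<m. (-1) ^ k * e k\<bar> \<le> real m * ln 2"
  proof -
    have "\<bar>\<Sum>k<m. (-1) ^ k * e k\<bar> \<le> (\<Sum>k<m. \<bar>(-1) ^ k * e k\<bar>)"
      by (rule sum_abs)
    also have "\<dots> \<le> (\<Sum>k<m. ln 2)"
      using e by (intro sum_mono) (simp add: abs_mult)
    finally show ?thesis
      by simp
  qed
  ultimately show ?thesis
    by (simp add: y_def L_def abs_mult)
qed

lemma gale_sign_at_base_power:
  assumes "j \<le> m + 1"
  shows "(-1) ^ j * poly gale_poly (base ^ (2 * j)) < (0::real)"
proof -
  define y where "y = base ^ (2 * j)"
  have "0 < y"
    using base_gt_1 by (simp add: y_def)
  have "0 < gale_monomial y"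
    using factor_pos[OF \<open>0 < y\<close>] by (simp add: gale_monomial_def prod_pos)
  have nz: "factor k y \<noteq> 0" for k
    using factor_pos[OF \<open>0 < y\<close>, of k] by simp
  have odd_pos: "0 < (\<Prod>k | k < m \<and> odd k. factor k y ^ 2)"
    using nz by (intro prod_pos) simp
  have poly_eq: "poly gale_poly y = (\<Prod>k | k < m \<and> odd k. factor k y ^ 2) * (y - gale_monomial y)"
    using nz by (intro poly_gale_poly_eq) simp
  have "2 * real m * ln 2 < ln base"
    by (simp add: ln_base)
  then have bound: "\<bar>ln y - ln (gale_monomial y) - (-1) ^ (j + 1) * ln base\<bar> < ln base"
    using ln_gale_monomial_at_base_power[OF assms] by (simp add: y_def)
  show ?thesis
  proof (cases "even j")
    case True
    then have "ln y < ln (gale_monomial y)"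
      using bound by (simp add: abs_less_iff)
    then have "y < gale_monomial y"
      using \<open>0 < y\<close> \<open>0 < gale_monomial y\<close> by simp
    then show ?thesis
      using True odd_pos poly_eq by (simp add: y_def mult_pos_neg)
  next
    case False
    then have "ln (gale_monomial y) < ln y"
      using bound by (simp add: abs_less_iff)
    then have "gale_monomial y < y"
      using \<open>0 < y\<close> \<open>0 < gale_monomial y\<close> by simp
    then show ?thesis
      using False odd_pos poly_eq by (simp add: y_def)
  qed
qed

lemma degree_gale_poly: "degree (gale_poly :: 'a::real_field poly) \<le> m + 1"
proof -
  let ?q = "\<lambda>k. [:of_real (scale k * offset k), of_real (scale k):] :: 'a poly"
  have "degree ([:0, 1:] * (\<Prod>k | k < m \<and> odd k. ?q k ^ 2)) \<le> 1 + 2 * (m div 2)"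
    using degree_mult_le[of "[:0, 1:]"] degree_prod_power2_le[of "{k. k < m \<and> odd k}" ?q]
    by (simp add: card_odd_below)
  moreover have "degree (\<Prod>k | k < m \<and> even k. ?q k ^ 2) \<le> 2 * ((m + 1) div 2)"
    using degree_prod_power2_le[of "{k. k < m \<and> even k}" ?q] by (simp add: card_even_below)
  ultimately show ?thesis
    unfolding gale_poly_def by (intro degree_diff_le) auto
qed

lemma gale_poly_root_between:
  assumes "j \<le> m"
  shows "\<exists>r. base ^ (2 * j) < r \<and> r < base ^ (2 * (j + 1)) \<and> poly gale_poly r = (0::real)"
proof (rule poly_IVT)
  show "base ^ (2 * j) < base ^ (2 * (j + 1))"
    using base_gt_1 by (intro power_strict_increasing) auto
  have "((-1) ^ j * poly gale_poly (base ^ (2 * j))) * ((-1) ^ (j + 1) * poly gale_poly (base ^ (2 * (j + 1)))) > (0::real)"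
    using gale_sign_at_base_power[of j] gale_sign_at_base_power[of "j + 1"] assms
    by (intro mult_neg_neg) auto
  then show "poly gale_poly (base ^ (2 * j)) * poly gale_poly (base ^ (2 * (j + 1))) < (0::real)"
    by (simp add: algebra_simps)
qed

lemma gale_poly_complex_ne_0: "(gale_poly :: complex poly) \<noteq> 0"
proof
  assume "(gale_poly :: complex poly) = 0"
  then have "of_real (poly gale_poly 1) = (0::complex)"
    by (metis poly_0 poly_gale_poly_of_real of_real_1)
  then show False
    using gale_sign_at_base_power[of 0] by simp
qed

lemma gale_poly_roots:
  obtains R :: "real set"
  where "card R = m + 1" "\<forall>r\<in>R. 0 < r" "{y::complex. poly gale_poly y = 0} = of_real ` R"
proof -
  obtain r where r: "\<And>j. j \<le> m \<Longrightarrow>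
      base ^ (2 * j) < r j \<and> r j < base ^ (2 * (j + 1)) \<and> poly gale_poly (r j) = (0::real)"
    using gale_poly_root_between by metis
  have "r i < r j" if "i < j" "j \<le> m" for i j
  proof -
    have "r i < base ^ (2 * (i + 1))"
      using r[of i] that by auto
    also have "\<dots> \<le> base ^ (2 * j)"
      using base_gt_1 that by (intro power_increasing) auto
    also have "\<dots> < r j"
      using r[of j] that by auto
    finally show ?thesis .
  qed
  then have "strict_mono_on {..m} r"
    by (auto intro: strict_mono_onI)
  then have "inj_on r {..m}"
    by (rule strict_mono_on_imp_inj_on)
  define R where "R = r ` {..m}"
  have card_R: "card R = m + 1"
    unfolding R_def using \<open>inj_on r {..m}\<close> by (simp add: card_image)
  have R_pos: "\<forall>x\<in>R. 0 < x"
  proof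
    fix x assume "x \<in> R"
    then obtain j where "j \<le> m" "x = r j"
      by (auto simp: R_def)
    moreover have "0 < base ^ (2 * j)"
      using base_gt_1 by simp
    ultimately show "0 < x"
      using r[of j] by linarith
  qed
  have "of_real ` R \<subseteq> {y::complex. poly gale_poly y = 0}"
    using r unfolding R_def by (auto simp: poly_gale_poly_of_real)
  moreover have "finite {y::complex. poly gale_poly y = 0}"
    using gale_poly_complex_ne_0 by (rule poly_roots_finite)
  moreover have "card {y::complex. poly gale_poly y = 0} \<le> card (of_real ` R :: complex set)"
    using card_poly_roots_bound[OF gale_poly_complex_ne_0] degree_gale_poly[where 'a=complex] card_R
    by (simp add: card_image inj_on_def)
  ultimately have "{y::complex. poly gale_poly y = 0} = of_real ` R"
    by (metis card_seteq)
  with card_R R_pos that show ?thesis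
    by blast
qed

definition gale_roots :: "real set" where
  "gale_roots = {y. poly gale_poly y = 0}"

lemma card_gale_roots: "card gale_roots = m + 1"
  and gale_roots_pos: "r \<in> gale_roots \<Longrightarrow> 0 < r"
  and complex_roots_gale_poly: "{y::complex. poly gale_poly y = 0} = of_real ` gale_roots"
proof -
  obtain R where R: "card R = m + 1" "\<forall>r\<in>R. 0 < r" "{y::complex. poly gale_poly y = 0} = of_real ` R"
    using gale_poly_roots by blast
  have "y \<in> gale_roots \<longleftrightarrow> (of_real y :: complex) \<in> of_real ` R" for y
    unfolding R(3)[symmetric] by (simp add: gale_roots_def poly_gale_poly_of_real)
  then have "gale_roots = R"
    by (auto simp: image_iff)
  with R show "card gale_roots = m + 1" "r \<in> gale_roots \<Longrightarrow> 0 < r"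
    "{y::complex. poly gale_poly y = 0} = of_real ` gale_roots"
    by simp_all
qed

end

section \<open>The circuit and the polynomial system\<close>

lemma sum_reindex_below:
  fixes idx :: "'n::finite \<Rightarrow> nat"
  assumes "bij_betw idx {i. idx i < m} {..<m}"
  shows "(\<Sum>i\<in>UNIV. if idx i < m then g (idx i) else 0) = (\<Sum>k<m. g k)"
proof -
  have "(\<Sum>i\<in>UNIV. if idx i < m then g (idx i) else 0) = (\<Sum>i | idx i < m. g (idx i))"
    using sum.inter_filter[of UNIV "\<lambda>i. g (idx i)" "\<lambda>i. idx i < m"] by simp
  also have "\<dots> = (\<Sum>k<m. g k)"
    using sum.reindex_bij_betw[OF assms] .
  finally show ?thesis .
qed

lemma prod_reindex_below:
  fixes idx :: "'n::finite \<Rightarrow> nat"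
  assumes "bij_betw idx {i. idx i < m} {..<m}"
  shows "(\<Prod>i\<in>UNIV. if idx i < m then g (idx i) else 1) = (\<Prod>k<m. g k)"
proof -
  have "(\<Prod>i\<in>UNIV. if idx i < m then g (idx i) else 1) = (\<Prod>i | idx i < m. g (idx i))"
    using prod.inter_filter[of UNIV "\<lambda>i. g (idx i)" "\<lambda>i. idx i < m"] by simp
  also have "\<dots> = (\<Prod>k<m. g k)"
    using prod.reindex_bij_betw[OF assms] .
  finally show ?thesis .
qed

lemma all_add_sum_eq_0_iff:
  fixes G :: "'n::finite \<Rightarrow> 'a::field_char_0"
  shows "(\<forall>j. G j + sum G UNIV = 0) \<longleftrightarrow> (\<forall>j. G j = 0)"
proof
  assume G: "\<forall>j. G j + sum G UNIV = 0"
  then have "(\<Sum>j\<in>UNIV. G j + sum G UNIV) = 0"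
    by simp
  then have "of_nat (CARD('n) + 1) * sum G UNIV = 0"
    by (simp add: sum.distrib algebra_simps)
  then have "sum G UNIV = 0"
    by (simp only: mult_eq_0_iff of_nat_eq_0_iff) simp
  then show "\<forall>j. G j = 0"
    using G by simp
qed simp

definition laurent_monomial :: "int^'n \<Rightarrow> 'a::real_field^'n \<Rightarrow> 'a" where
  "laurent_monomial a x = (\<Prod>i\<in>UNIV. (x $ i) powi (a $ i))"

lemma laurent_monomial_0: "laurent_monomial 0 x = 1"
  by (simp add: laurent_monomial_def)

lemma laurent_monomial_axis: "laurent_monomial (axis i 1) x = x $ i"
proof -
  have "laurent_monomial (axis i 1) x = (\<Prod>j\<in>UNIV. if j = i then x $ j else 1)"
    unfolding laurent_monomial_def by (rule prod.cong) (auto simp: axis_def)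
  then show ?thesis
    by simp
qed

lemma real_pt_inj: "inj real_pt"
  by (auto simp: inj_def real_pt_def vec_eq_iff)

lemma real_pt_0: "real_pt 0 = 0"
  by (simp add: real_pt_def vec_eq_iff)

lemma real_pt_axis: "real_pt (axis i 1) = axis i 1"
  by (simp add: real_pt_def vec_eq_iff axis_def)

locale alternating_circuit = gale_construction +
  fixes idx :: "'n::finite \<Rightarrow> nat"
  assumes idx_bij: "bij_betw idx {i. idx i < m} {..<m}"
begin

definition apex :: "int^'n" where
  "apex = (\<chi> i. if idx i < m then 2 * (-1) ^ idx i else 0)"

definition circuit :: "(int^'n) set" where
  "circuit = insert 0 (insert apex (range (\<lambda>i. axis i 1)))"

text \<open>The affine dependence P - (\<Sum>i. P$i e_i) + ((\<Sum>i. P$i) - 1) 0 = 0 of the real points,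
  where P is the apex.\<close>
definition dependence :: "real^'n \<Rightarrow> real" where
  "dependence v = (if v = real_pt apex then 1 else if v = 0 then (\<Sum>i\<in>UNIV. real_pt apex $ i) - 1
                   else - (v \<bullet> real_pt apex))"

lemma idx_surj: "k < m \<Longrightarrow> \<exists>i. idx i = k"
  using idx_bij by (metis (mono_tags, lifting) bij_betw_iff_bijections lessThan_iff)

lemma real_apex_nth: "real_pt apex $ i = (if idx i < m then 2 * (-1) ^ idx i else 0)"
  by (simp add: real_pt_def apex_def)

lemma apex_ne_0: "apex \<noteq> 0" and apex_ne_axis: "apex \<noteq> axis i 1"
proof -
  obtain i0 where "idx i0 = 0"
    using idx_surj m_pos by blast
  then have "apex $ i0 = 2"
    using m_pos by (simp add: apex_def)
  then show "apex \<noteq> 0" "apex \<noteq> axis i 1"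
    by (auto simp: axis_def split: if_splits)
qed

lemma real_circuit:
  "real_pt ` circuit = insert 0 (insert (real_pt apex) (range (\<lambda>i. axis i 1)))"
  by (simp add: circuit_def image_image real_pt_0 real_pt_axis)

lemma real_apex_ne_0: "real_pt apex \<noteq> 0"
  and real_apex_ne_axis: "real_pt apex \<noteq> axis i 1"
proof -
  have "real_pt apex \<noteq> real_pt 0" "real_pt apex \<noteq> real_pt (axis i 1)"
    using apex_ne_0 apex_ne_axis real_pt_inj by (auto dest: injD)
  then show "real_pt apex \<noteq> 0" "real_pt apex \<noteq> axis i 1"
    by (simp_all add: real_pt_0 real_pt_axis)
qed

lemma sum_circuit: "sum g circuit = g 0 + g apex + (\<Sum>i\<in>UNIV. g (axis i 1))"
proof -
  have "0 \<notin> insert apex (range (\<lambda>i. axis i 1))" "apex \<notin> range (\<lambda>i. axis i 1)"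
    using apex_ne_0 apex_ne_axis by auto
  moreover have "inj (\<lambda>i::'n. axis i (1::int))"
    by (auto simp: inj_def axis_eq_axis)
  ultimately show ?thesis
    unfolding circuit_def by (simp add: sum.reindex add.assoc)
qed

lemma sum_real_circuit:
  "sum g (real_pt ` circuit) = g 0 + g (real_pt apex) + (\<Sum>i\<in>UNIV. g (axis i 1))"
  using sum_circuit[of "g \<circ> real_pt"]
  by (simp add: sum.reindex[OF inj_on_subset[OF real_pt_inj subset_UNIV]] real_pt_0 real_pt_axis)

lemma card_circuit: "card circuit = CARD('n) + 2"
  using sum_circuit[of "\<lambda>_. 1::nat"] by simp

lemma is_circuit: "is_circuit circuit"
proof -
  have "(Basis :: (real^'n) set) \<subseteq> real_pt ` circuit"
    by (auto simp: real_circuit Basis_vec_def)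
  then have "span Basis \<subseteq> span (real_pt ` circuit)"
    by (rule span_mono)
  moreover have "affine hull (real_pt ` circuit) = span (real_pt ` circuit)"
    by (intro affine_hull_span_0 hull_inc) (simp add: real_circuit)
  ultimately have "affine hull (real_pt ` circuit) = UNIV"
    by auto
  then show ?thesis
    using card_circuit by (simp add: is_circuit_def circuit_def)
qed

lemma sum_real_apex: "(\<Sum>i\<in>UNIV. real_pt apex $ i) = (if even m then 0 else 2)"
  using sum_reindex_below[OF idx_bij, of "\<lambda>k. 2 * (-1::real) ^ k"]
  by (simp add: real_apex_nth sum_neg_one_power flip: sum_distrib_left)

lemma sum_abs_real_apex: "(\<Sum>i\<in>UNIV. \<bar>real_pt apex $ i\<bar>) = 2 * real m"
  using sum_reindex_below[OF idx_bij, of "\<lambda>k. 2::real"]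
  by (simp add: real_apex_nth abs_mult if_distrib[of abs] cong: if_cong)

lemma dependence_apex: "dependence (real_pt apex) = 1"
  by (simp add: dependence_def)

lemma dependence_0: "dependence 0 = (-1) ^ (m + 1)"
  using real_apex_ne_0 sum_real_apex by (auto simp: dependence_def)

lemma dependence_axis: "dependence (axis i 1) = - real_pt apex $ i"
  using real_apex_ne_axis[of i] by (auto simp: dependence_def inner_axis')

lemma affine_circuit: "affine_circuit (real_pt ` circuit) dependence"
proof
  show "finite (real_pt ` circuit)"
    by (simp add: circuit_def)
  show "sum dependence (real_pt ` circuit) = 0"
    by (simp add: sum_real_circuit dependence_axis dependence_apex dependence_def[of 0] real_apex_ne_0
        sum_negf)
  have "(\<Sum>x\<in>real_pt ` circuit. dependence x *\<^sub>R x)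
          = real_pt apex + (\<Sum>i\<in>UNIV. (- real_pt apex $ i) *\<^sub>R axis i 1)"
    by (simp add: sum_real_circuit dependence_axis dependence_apex)
  then show "(\<Sum>x\<in>real_pt ` circuit. dependence x *\<^sub>R x) = 0"
    unfolding sum_scaleR_axis by (simp add: vec_eq_iff)
  show "\<exists>x\<in>real_pt ` circuit. dependence x \<noteq> 0"
    using dependence_apex by (auto simp: real_circuit)
next
  fix u assume sum_u: "sum u (real_pt ` circuit) = 0"
    and sum_u_scaleR: "(\<Sum>x\<in>real_pt ` circuit. u x *\<^sub>R x) = 0"
  have u_axis: "u (axis j 1) = u (real_pt apex) * dependence (axis j 1)" for j
  proof -
    have "(u (real_pt apex) *\<^sub>R real_pt apex + (\<chi> i. u (axis i 1))) $ j = 0"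
      using sum_u_scaleR by (simp add: sum_real_circuit sum_scaleR_axis)
    then show ?thesis
      by (simp add: dependence_axis)
  qed
  moreover have "u 0 = u (real_pt apex) * dependence 0"
    using sum_u real_apex_ne_0
    by (simp add: sum_real_circuit u_axis dependence_axis dependence_def[of 0] sum_negf
        sum_distrib_left[symmetric] algebra_simps)
  ultimately show "\<exists>s. \<forall>x\<in>real_pt ` circuit. u x = s * dependence x"
    by (auto simp: real_circuit dependence_apex)
qed

lemma circuit_core:
  "circuit_core circuit = insert 0 (insert (real_pt apex) ((\<lambda>i. axis i 1) ` {i. idx i < m}))"
proof -
  have "{x \<in> real_pt ` circuit. dependence x \<noteq> 0}
          = insert 0 (insert (real_pt apex) ((\<lambda>i. axis i 1) ` {i. idx i < m}))"
    by (auto simp: real_circuit dependence_0 dependence_apex dependence_axis real_apex_nth split: if_splits)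
  then show ?thesis
    unfolding circuit_core_def affine_circuit.minimal_affine_dependent_subset_eq[OF affine_circuit] .
qed

lemma circuit_m: "circuit_m circuit = int m"
proof -
  let ?E = "(\<lambda>i. axis i (1::real)) ` {i. idx i < m}"
  have "(\<Sum>i\<in>{i. idx i < m}. real_pt apex $ i *\<^sub>R axis i 1) = (\<Sum>i\<in>UNIV. real_pt apex $ i *\<^sub>R axis i 1)"
    by (intro sum.mono_neutral_left) (auto simp: real_apex_nth)
  also have "\<dots> = real_pt apex"
    by (simp only: sum_scaleR_axis vec_lambda_eta)
  finally have apex_sum: "(\<Sum>i\<in>{i. idx i < m}. real_pt apex $ i *\<^sub>R axis i 1) = real_pt apex" .
  have "(\<Sum>i\<in>{i. idx i < m}. real_pt apex $ i *\<^sub>R axis i 1) \<in> span ?E"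
    by (intro span_sum span_scale span_base) auto
  then have "real_pt apex \<in> span ?E"
    unfolding apex_sum .
  then have "span (circuit_core circuit) = span ?E"
    by (simp add: circuit_core span_redundant)
  then have "dim (circuit_core circuit) = dim ?E"
    by (metis dim_span)
  also have "\<dots> = m"
  proof -
    have "independent ?E"
      by (rule independent_mono[OF independent_Basis]) (auto simp: Basis_vec_def)
    moreover have "inj_on (\<lambda>i. axis i (1::real)) {i. idx i < m}"
      by (auto simp: inj_on_def axis_eq_axis)
    ultimately show ?thesis
      using bij_betw_same_card[OF idx_bij] by (simp add: dim_eq_card_independent card_image)
  qed
  moreover have "aff_dim (circuit_core circuit) = int (dim (circuit_core circuit))"
    using aff_dim_eq_dim[of 0 "circuit_core circuit"] by (simp add: circuit_core hull_inc)
  ultimately show ?thesis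
    by (simp add: circuit_m_def)
qed

lemma measure_convex_hull_real_circuit_Diff:
  assumes "p \<in> real_pt ` circuit" "p \<noteq> 0"
  shows "measure lebesgue (convex hull (real_pt ` circuit - {p})) = \<bar>dependence p\<bar> / fact CARD('n)"
proof -
  consider "p = real_pt apex" | k where "p = axis k 1"
    using assms by (auto simp: real_circuit)
  then show ?thesis
  proof cases
    case 1
    then have "real_pt ` circuit - {p} = insert 0 (range (\<lambda>i. axis i 1))"
      using real_apex_ne_0 real_apex_ne_axis[symmetric] by (auto simp: real_circuit)
    then show ?thesis
      using 1 by (simp add: measure_std_simplex_cart dependence_apex)
  next
    case 2
    then have "real_pt ` circuit - {p} = insert 0 (insert (real_pt apex) ((\<lambda>i. axis i 1) ` (- {k})))"
      using real_apex_ne_axis[of k] by (auto simp: real_circuit axis_eq_axis)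
    then show ?thesis
      using 2 by (simp add: measure_simplex_replace_axis dependence_axis)
  qed
qed

lemma normalized_volume_circuit: "normalized_volume circuit = real m + 1"
proof -
  define c :: real where "c = (-1) ^ m"
  \<comment> \<open>With this sign the origin is on the negative side, so every simplex of the
    triangulation keeps the vertex 0 and is of the form measured above.\<close>
  have c_dep_0: "c * dependence 0 < 0"
    by (simp add: c_def dependence_0 flip: power_add)
  interpret c_circuit: affine_circuit "real_pt ` circuit" "\<lambda>x. c * dependence x"
    using affine_circuit.affine_circuit_scale[OF affine_circuit] by (simp add: c_def)
  let ?P = "{x \<in> real_pt ` circuit. 0 < c * dependence x}"
  have "card (real_pt ` circuit) = DIM(real^'n) + 2"
    using card_circuit by (simp add: card_image[OF inj_on_subset[OF real_pt_inj subset_UNIV]])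
  then have "measure lebesgue (convex hull (real_pt ` circuit))
               = (\<Sum>p\<in>?P. measure lebesgue (convex hull (real_pt ` circuit - {p})))"
    by (intro measure_convex_hull_affine_circuit c_circuit.affine_circuit_axioms)
  also have "\<dots> = (\<Sum>p\<in>?P. c * dependence p) / fact CARD('n)"
    unfolding sum_divide_distrib
  proof (intro sum.cong refl)
    fix p assume "p \<in> ?P"
    then have "p \<in> real_pt ` circuit" "p \<noteq> 0" "0 < c * dependence p"
      using c_dep_0 by auto
    moreover have "\<bar>dependence p\<bar> = \<bar>c * dependence p\<bar>"
      by (simp add: abs_mult c_def)
    ultimately show "measure lebesgue (convex hull (real_pt ` circuit - {p})) = c * dependence p / fact CARD('n)"
      by (simp add: measure_convex_hull_real_circuit_Diff)
  qed
  also have "(\<Sum>p\<in>?P. c * dependence p) = (\<Sum>p\<in>real_pt ` circuit. \<bar>dependence p\<bar>) / 2"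
    using sum_pos_eq_half_sum_abs[OF c_circuit.finite_X c_circuit.sum_lam]
    by (simp add: abs_mult c_def)
  also have "(\<Sum>p\<in>real_pt ` circuit. \<bar>dependence p\<bar>) = 2 * real m + 2"
    by (simp add: sum_real_circuit dependence_0 dependence_apex dependence_axis sum_abs_real_apex)
  finally show ?thesis
    by (simp add: normalized_volume_def)
qed

definition curve_const :: "'n \<Rightarrow> real" where
  "curve_const i = (if idx i < m then scale (idx i) * offset (idx i) else 1)"

definition curve_slope :: "'n \<Rightarrow> real" where
  "curve_slope i = (if idx i < m then scale (idx i) else 0)"

definition curve :: "'a::real_field \<Rightarrow> 'a^'n" where
  "curve y = (\<chi> i. of_real (curve_const i) + of_real (curve_slope i) * y)"

text \<open>Equation j is G j + (\<Sum>i. G i) with G i x = x$i - curve_const i - curve_slope i * x^apex.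
  Adding the sum makes every monomial of the circuit occur in every equation, and since
  I + J is invertible the system is equivalent to G = 0, i.e. to x = curve (x^apex).\<close>
definition system :: "'n \<Rightarrow> int^'n \<Rightarrow> real" where
  "system j a =
     (if a = 0 then - (curve_const j + sum curve_const UNIV)
      else if a = apex then - (curve_slope j + sum curve_slope UNIV)
      else if a \<in> range (\<lambda>i. axis i 1) then (if a = axis j 1 then 2 else 1) else 0)"

lemma curve_nth: "curve y $ i = (if idx i < m then factor (idx i) y else 1)"
  by (simp add: curve_def curve_const_def curve_slope_def factor_def algebra_simps)

lemma inj_curve: "inj (curve :: 'a::real_field \<Rightarrow> 'a^'n)"
proof (rule injI)
  fix y z :: 'a assume "curve y = curve z"
  moreover obtain i0 where "idx i0 = 0"
    using idx_surj m_pos by blast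
  ultimately have "curve y $ i0 = curve z $ i0"
    by simp
  then have "of_real (scale 0) * y = of_real (scale 0) * z"
    using \<open>idx i0 = 0\<close> m_pos by (simp add: curve_def curve_slope_def)
  then show "y = z"
    using scale_pos[of 0] by simp
qed

lemma supported_on_system: "supported_on system circuit"
proof -
  obtain i0 where "idx i0 = 0"
    using idx_surj m_pos by blast
  then have slope_sum: "0 < sum curve_slope UNIV"
    using m_pos scale_pos
    by (intro sum_pos2[where i=i0]) (auto simp: curve_slope_def less_imp_le)
  have const_sum: "0 < sum curve_const UNIV"
    and const_pos: "0 < curve_const j" and slope_nonneg: "0 \<le> curve_slope j" for j
    using scale_pos offset_pos by (auto simp: curve_const_def curve_slope_def intro!: sum_pos less_imp_le)
  have "system j a \<noteq> 0 \<longleftrightarrow> a \<in> circuit" for j a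
    using apex_ne_0 apex_ne_axis[symmetric] slope_sum const_sum const_pos[of j] slope_nonneg[of j]
    by (auto simp: system_def circuit_def)
  then show ?thesis
    by (auto simp: supported_on_def)
qed

lemma system_0: "system j 0 = - (curve_const j + sum curve_const UNIV)"
  and system_apex: "system j apex = - (curve_slope j + sum curve_slope UNIV)"
  and system_axis: "system j (axis i 1) = (if i = j then 2 else 1)"
  using apex_ne_0 apex_ne_axis[symmetric] by (auto simp: system_def axis_eq_axis)

lemma laurent_eval_system:
  fixes x :: "'a::real_field^'n"
  defines "G \<equiv> \<lambda>i. x $ i - of_real (curve_const i) - of_real (curve_slope i) * laurent_monomial apex x"
  shows "laurent_eval (system j) x = G j + sum G UNIV"
proof -
  have "laurent_eval (system j) x = (\<Sum>a\<in>circuit. of_real (system j a) * laurent_monomial a x)"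
    using supported_on_system by (simp add: laurent_eval_def supported_on_def laurent_monomial_def)
  also have "\<dots> = - of_real (curve_const j + sum curve_const UNIV)
      - of_real (curve_slope j + sum curve_slope UNIV) * laurent_monomial apex x
      + (\<Sum>i\<in>UNIV. of_real (if i = j then 2 else 1) * x $ i)"
    by (simp add: sum_circuit system_0 system_apex system_axis laurent_monomial_0 laurent_monomial_axis
        algebra_simps)
  also have "(\<Sum>i\<in>UNIV. of_real (if i = j then 2 else 1) * x $ i) = x $ j + (\<Sum>i\<in>UNIV. x $ i)"
  proof -
    have "(\<Sum>i\<in>UNIV. of_real (if i = j then 2 else 1) * x $ i) = (\<Sum>i\<in>UNIV. (if i = j then x $ i else 0) + x $ i)"
      by (rule sum.cong) auto
    then show ?thesis
      by (simp add: sum.distrib)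
  qed
  finally show ?thesis
    by (simp add: G_def sum_subtractf sum.distrib sum_distrib_left sum_distrib_right algebra_simps)
qed

lemma system_solution_iff:
  fixes x :: "'a::real_field^'n"
  shows "(\<forall>j. laurent_eval (system j) x = 0) \<longleftrightarrow> x = curve (laurent_monomial apex x)"
  unfolding laurent_eval_system all_add_sum_eq_0_iff by (auto simp: curve_def vec_eq_iff diff_eq_eq add_ac)

lemma laurent_monomial_curve: "laurent_monomial apex (curve y) = gale_monomial y"
  unfolding laurent_monomial_def gale_monomial_def
  using prod_reindex_below[OF idx_bij, of "\<lambda>k. factor k y powi (2 * (-1) ^ k)"]
  by (simp add: curve_nth apex_def if_distrib[of "\<lambda>e. _ powi e"] cong: if_cong)

lemma curve_nonzero_iff: "(\<forall>i. curve y $ i \<noteq> 0) \<longleftrightarrow> (\<forall>k<m. factor k y \<noteq> 0)"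
  using idx_surj by (auto simp: curve_nth)

lemma nonzero_solutions_eq:
  "{x :: 'a::real_field^'n. (\<forall>i. x $ i \<noteq> 0) \<and> (\<forall>j. laurent_eval (system j) x = 0)}
     = curve ` {y. (\<forall>k<m. factor k y \<noteq> 0) \<and> poly gale_poly y = 0}"
proof (intro equalityI subsetI)
  fix x :: "'a^'n" assume "x \<in> {x. (\<forall>i. x $ i \<noteq> 0) \<and> (\<forall>j. laurent_eval (system j) x = 0)}"
  then have x: "x = curve (laurent_monomial apex x)" "\<forall>i. x $ i \<noteq> 0"
    by (auto simp: system_solution_iff)
  then have "\<forall>k<m. factor k (laurent_monomial apex x) \<noteq> 0"
    by (metis curve_nonzero_iff)
  moreover have "gale_monomial (laurent_monomial apex x) = laurent_monomial apex x"
    by (metis x(1) laurent_monomial_curve)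
  ultimately show "x \<in> curve ` {y. (\<forall>k<m. factor k y \<noteq> 0) \<and> poly gale_poly y = 0}"
    using x(1) poly_gale_poly_eq_0_iff by blast
next
  fix x :: "'a^'n" assume "x \<in> curve ` {y. (\<forall>k<m. factor k y \<noteq> 0) \<and> poly gale_poly y = 0}"
  then obtain y where y: "\<forall>k<m. factor k y \<noteq> 0" "poly gale_poly y = 0" and x: "x = curve y"
    by blast
  then have "laurent_monomial apex x = y"
    using poly_gale_poly_eq_0_iff[OF y(1)] by (simp add: laurent_monomial_curve)
  then show "x \<in> {x. (\<forall>i. x $ i \<noteq> 0) \<and> (\<forall>j. laurent_eval (system j) x = 0)}"
    using x y(1) by (simp add: system_solution_iff curve_nonzero_iff)
qed

lemma torus_solutions_system: "torus_solutions system = curve ` of_real ` gale_roots"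
proof -
  have "factor k (of_real r :: complex) \<noteq> 0" if "r \<in> gale_roots" for k r
    using factor_pos[OF gale_roots_pos[OF that], of k] by (auto simp: factor_of_real)
  then have "{y::complex. (\<forall>k<m. factor k y \<noteq> 0) \<and> poly gale_poly y = 0} = of_real ` gale_roots"
    using complex_roots_gale_poly by blast
  then show ?thesis
    unfolding torus_solutions_def nonzero_solutions_eq by simp
qed

lemma positive_solutions_system: "positive_solutions system = curve ` gale_roots"
proof -
  have "factor k r \<noteq> 0" if "r \<in> gale_roots" for k r
    using factor_pos[OF gale_roots_pos[OF that], of k] by auto
  then have "{y::real. (\<forall>k<m. factor k y \<noteq> 0) \<and> poly gale_poly y = 0} = gale_roots"
    by (auto simp: gale_roots_def)
  then have nonzero: "{x :: real^'n. (\<forall>i. x $ i \<noteq> 0) \<and> (\<forall>j. laurent_eval (system j) x = 0)}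
                        = curve ` gale_roots"
    unfolding nonzero_solutions_eq by simp
  have curve_pos: "0 < curve r $ i" if "r \<in> gale_roots" for r i
    using factor_pos[OF gale_roots_pos[OF that]] by (simp add: curve_nth)
  show ?thesis
  proof (intro equalityI subsetI)
    fix x assume "x \<in> positive_solutions system"
    then have "(\<forall>i. x $ i \<noteq> 0) \<and> (\<forall>j. laurent_eval (system j) x = 0)"
      by (simp add: positive_solutions_def order_less_imp_not_eq2)
    then show "x \<in> curve ` gale_roots"
      using nonzero by blast
  next
    fix x assume x: "x \<in> curve ` gale_roots"
    then have "\<forall>j. laurent_eval (system j) x = 0"
      using nonzero by blast
    moreover have "\<forall>i. 0 < x $ i"
      using x curve_pos by blast
    ultimately show "x \<in> positive_solutions system"
      by (simp add: positive_solutions_def)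
  qed
qed

lemma card_solutions_system:
  "finite (torus_solutions system)" "card (torus_solutions system) = m + 1"
  "finite (positive_solutions system)" "card (positive_solutions system) = m + 1"
proof -
  have "finite gale_roots"
    using card_gale_roots by (simp add: card_ge_0_finite)
  then show "finite (torus_solutions system)" "finite (positive_solutions system)"
    unfolding torus_solutions_system positive_solutions_system by simp_all
  have "card (curve ` of_real ` gale_roots :: (complex^'n) set) = card (of_real ` gale_roots :: complex set)"
    "card (curve ` gale_roots :: (real^'n) set) = card gale_roots"
    by (intro card_image inj_on_subset[OF inj_curve] subset_UNIV)+
  moreover have "card (of_real ` gale_roots :: complex set) = card gale_roots"
    by (intro card_image) (simp add: inj_on_def)
  ultimately show "card (torus_solutions system) = m + 1" "card (positive_solutions system) = m + 1"
    unfolding torus_solutions_system positive_solutions_system using card_gale_roots by simp_all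
qed

end

theorem theorem3p6:
  fixes m :: nat
  assumes "1 \<le> m" and "m \<le> CARD('n::finite)"
  shows "\<exists>(C :: (int ^ 'n) set) (F :: 'n \<Rightarrow> int ^ 'n \<Rightarrow> real).
           is_circuit C \<and> circuit_m C = int m \<and>
           supported_on F C \<and> generic_system F C \<and>
           finite (positive_solutions F) \<and> card (positive_solutions F) = m + 1"
proof -
  obtain idx :: "'n \<Rightarrow> nat" where idx: "bij_betw idx UNIV {..<CARD('n)}"
    using ex_bij_betw_finite_nat[of "UNIV :: 'n set"] by (auto simp: atLeast0LessThan)
  have "idx ` {i. idx i < m} = {..<m}"
  proof (intro equalityI subsetI)
    fix k assume "k \<in> {..<m}"
    then have "k \<in> idx ` UNIV"
      using idx assms(2) by (auto simp: bij_betw_def)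
    then show "k \<in> idx ` {i. idx i < m}"
      using \<open>k \<in> {..<m}\<close> by auto
  qed auto
  then have "bij_betw idx {i. idx i < m} {..<m}"
    using idx by (auto intro: bij_betw_subset)
  then interpret alternating_circuit m idx
    using assms(1) by unfold_locales auto
  show ?thesis
    using is_circuit circuit_m supported_on_system card_solutions_system normalized_volume_circuit
    by (intro exI[of _ circuit] exI[of _ system]) (simp add: generic_system_def)
qed

end
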